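(* Under the hypotheses of the theorem stated in the context, let $\hat\theta^{\mathrm{all}}=\big(\sum_{i=1}^nX_i^TX_i\big)^{-1}\big(\sum_{i=1}^nX_i^Ty_i\big)$. Then for every client $i$, $$\mathbb E\|\hat\theta_i-\theta_i^*\|^2\le\min\Big\{\mathbb E\|\hat\theta^d_i-\theta_i^*\|^2,\ \mathbb E\|\hat\theta^{\mathrm{all}}-\theta_i^*\|^2\Big\},$$ with expectations over all randomness in the model.
   Context: Hierarchical linear model: clients $1,\dots,n$ are partitioned into nonempty disjoint clusters $\mathcal I_1,\dots,\mathcal I_k$. For an unknown $\bar\theta^*\in\mathbb R^d$ and known variances $\bar\sigma^2>0$, $\bar\sigma_j^2>0$, $\sigma_i^2>0$: $\bar\theta_j^*=\bar\theta^*+\bar\xi_j$ with $\bar\xi_j\sim\mathcal N(0,\bar\sigma^2I_d)$; $\theta_i^*=\bar\theta_j^*+\xi_i$ with $\xi_i\sim\mathcal N(0,\bar\sigma_j^2I_d)$ for $i\in\mathcal I_j$; $y_i=X_i\theta_i^*+\epsilon_i$ with $\epsilon_i\sim\mathcal N(0,\sigma_i^2I_{n_i})$, $X_i\in\mathbb R^{n_i\times d}$ deterministic; all noise variables mutually independent. Hypotheses: $X_i^TX_i=\beta_iI_d$ with $\beta_i>0$ for all $i$; $\hat\theta^d_i=(X_i^TX_i)^{-1}X_i^Ty_i$; $\{\hat\theta_i\}$ are the $\theta$-components of the minimizer of $\sum_{j=1}^k\big(\frac{\lambda_j}{2}\|w_j-\bar w\|^2+\sum_{i\in\mathcal I_j}(\frac{1}{2\sigma_i^2}\|y_i-X_i\theta_i\|^2+\frac{\gamma_i}{2}\|\theta_i-w_j\|^2)\big)$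 over $\theta_i,w_j,\bar w\in\mathbb R^d$, with $\lambda_j=1/\bar\sigma^2$ and $\gamma_i=1/\bar\sigma_j^2$ for $i\in\mathcal I_j$. *)

theory Defs
  imports "HOL-Probability.Probability"
begin

text \<open>Clients are indexed by i < n, clusters by j < k; the partition into
clusters is given by an assignment c, client i belonging to cluster c i.
Parameter vectors live in real^'d (d = CARD('d)). Client i's design matrix X_i has
n_i = m i rows; row r (r < m i) is the vector X i r :: real^'d.
All scalar Gaussian noise variables are collected in one family N indexed by noise_idx:
  Bar j a  : coordinate a of xibar_j (cluster noise)
  Loc i a  : coordinate a of xi_i    (client noise)
  Eps i r  : entry r of epsilon_i    (observation noise)\<close>

datatype 'd noise_idx = Bar nat 'd | Loc nat 'd | Eps nat nat

definition noise_index_set :: "nat \<Rightarrow> nat \<Rightarrow> (nat \<Rightarrow> nat) \<Rightarrow> 'd noise_idx set" where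
  "noise_index_set n k m = {Bar j a | j a. j < k} \<union> {Loc i a | i a. i < n}
      \<union> {Eps i r | i r. i < n \<and> r < m i}"

definition cluster_param :: "real^'d \<Rightarrow> ('d noise_idx \<Rightarrow> 'a \<Rightarrow> real) \<Rightarrow> nat \<Rightarrow> 'a \<Rightarrow> real^'d" where
  "cluster_param thstar N j \<omega> = thstar + (\<chi> a. N (Bar j a) \<omega>)"

definition client_param :: "real^'d \<Rightarrow> ('d noise_idx \<Rightarrow> 'a \<Rightarrow> real) \<Rightarrow> (nat \<Rightarrow> nat) \<Rightarrow> nat \<Rightarrow> 'a \<Rightarrow> real^'d" where
  "client_param thstar N c i \<omega> = cluster_param thstar N (c i) \<omega> + (\<chi> a. N (Loc i a) \<omega>)"

definition obs :: "(nat \<Rightarrow> nat \<Rightarrow> real^'d) \<Rightarrow> real^'d \<Rightarrow> ('d noise_idx \<Rightarrow> 'a \<Rightarrow> real) \<Rightarrow> (nat \<Rightarrow> nat)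
     \<Rightarrow> nat \<Rightarrow> nat \<Rightarrow> 'a \<Rightarrow> real" where
  "obs X thstar N c i r \<omega> = X i r \<bullet> client_param thstar N c i \<omega> + N (Eps i r) \<omega>"

definition gram :: "(nat \<Rightarrow> nat \<Rightarrow> real^'d) \<Rightarrow> (nat \<Rightarrow> nat) \<Rightarrow> nat \<Rightarrow> real^'d^'d" where
  "gram X m i = (\<chi> a b. \<Sum>r<m i. X i r $ a * X i r $ b)"

definition xty :: "(nat \<Rightarrow> nat \<Rightarrow> real^'d) \<Rightarrow> (nat \<Rightarrow> nat) \<Rightarrow> (nat \<Rightarrow> nat \<Rightarrow> real) \<Rightarrow> nat \<Rightarrow> real^'d" where
  "xty X m y i = (\<Sum>r<m i. y i r *\<^sub>R X i r)"

definition local_est :: "(nat \<Rightarrow> nat \<Rightarrow> real^'d) \<Rightarrow> (nat \<Rightarrow> nat) \<Rightarrow> (nat \<Rightarrow> nat \<Rightarrow> real) \<Rightarrow> nat \<Rightarrow> real^'d" where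
  "local_est X m y i = matrix_inv (gram X m i) *v xty X m y i"

definition pooled_est :: "nat \<Rightarrow> (nat \<Rightarrow> nat \<Rightarrow> real^'d) \<Rightarrow> (nat \<Rightarrow> nat) \<Rightarrow> (nat \<Rightarrow> nat \<Rightarrow> real) \<Rightarrow> real^'d" where
  "pooled_est n X m y = matrix_inv (\<Sum>i<n. gram X m i) *v (\<Sum>i<n. xty X m y i)"

text \<open>Hierarchical objective with lambda_j = 1/sbar^2 and gamma_i = 1/sc(c i)^2;
 s i is the noise standard deviation sigma_i.\<close>
definition hier_obj :: "nat \<Rightarrow> nat \<Rightarrow> (nat \<Rightarrow> nat) \<Rightarrow> (nat \<Rightarrow> nat) \<Rightarrow> (nat \<Rightarrow> nat \<Rightarrow> real^'d)
     \<Rightarrow> real \<Rightarrow> (nat \<Rightarrow> real) \<Rightarrow> (nat \<Rightarrow> real) \<Rightarrow> (nat \<Rightarrow> nat \<Rightarrow> real)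
     \<Rightarrow> (nat \<Rightarrow> real^'d) \<Rightarrow> (nat \<Rightarrow> real^'d) \<Rightarrow> real^'d \<Rightarrow> real" where
  "hier_obj n k c m X sbar sc s y \<theta> w wb =
     (\<Sum>j<k. (1 / sbar\<^sup>2) / 2 * (norm (w j - wb))\<^sup>2
        + (\<Sum>i\<in>{i. i < n \<and> c i = j}.
             1 / (2 * (s i)\<^sup>2) * (\<Sum>r<m i. (y i r - X i r \<bullet> \<theta> i)\<^sup>2)
             + (1 / (sc j)\<^sup>2) / 2 * (norm (\<theta> i - w j))\<^sup>2))"

definition hier_est :: "nat \<Rightarrow> nat \<Rightarrow> (nat \<Rightarrow> nat) \<Rightarrow> (nat \<Rightarrow> nat) \<Rightarrow> (nat \<Rightarrow> nat \<Rightarrow> real^'d)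
     \<Rightarrow> real \<Rightarrow> (nat \<Rightarrow> real) \<Rightarrow> (nat \<Rightarrow> real) \<Rightarrow> (nat \<Rightarrow> nat \<Rightarrow> real) \<Rightarrow> nat \<Rightarrow> real^'d" where
  "hier_est n k c m X sbar sc s y =
     (SOME \<theta>. \<exists>w wb. \<forall>\<theta>' w' wb'.
        hier_obj n k c m X sbar sc s y \<theta> w wb \<le> hier_obj n k c m X sbar sc s y \<theta>' w' wb')"

end

theory Submission
  imports Defs
begin

text \<open>Write b l for the local least-squares estimate of client l. The local and the pooled
  estimators are affine combinations of the b l, with weights the unit vector at i and
  \<beta> l / (\<Sum>l. \<beta> l) respectively. Since every Gram matrix is a multiple of the identity, the
  hierarchical objective is, up to a constant, a weighted sum of squared distances between the
  b l and the parameters; completing squares cluster by cluster minimises it in closed form, so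
  the hierarchical estimate of client i is an affine combination of the b l as well, with explicit
  shrinkage weights. For any affine combination the estimation error is a linear form in the
  independent Gaussian noise variables, so its mean squared error is d times a convex quadratic
  function of the weights. The shrinkage weights satisfy the Lagrange condition for minimising
  this quadratic on the hyperplane of weights summing to one, so they beat the local and the
  pooled weights.\<close>

section \<open>Gaussian quadratic forms\<close>

lemma (in prob_space) indep_normal_mult:
  fixes N :: "'i \<Rightarrow> 'a \<Rightarrow> real"
  assumes "S \<subseteq> I" and indep: "indep_vars (\<lambda>_. borel) N I"
    and normal: "\<And>t. t \<in> S \<Longrightarrow> \<sigma> t > 0 \<and> distributed M lborel (N t) (normal_density 0 (\<sigma> t))"
    and "s \<in> S" "t \<in> S"
  shows "integrable M (\<lambda>\<omega>. N s \<omega> * N t \<omega>)"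
    and "expectation (\<lambda>\<omega>. N s \<omega> * N t \<omega>) = (if s = t then (\<sigma> t)\<^sup>2 else 0)"
proof -
  have integrable: "integrable M (N u)" and centered: "expectation (N u) = 0" if "u \<in> S" for u
  proof -
    from normal[OF that] have "\<sigma> u > 0" and D: "distributed M lborel (N u) (normal_density 0 (\<sigma> u))"
      by auto
    then show "integrable M (N u)"
      by (auto intro: distributed_integrable_var[OF D]
               simp: integrable_normal_moment_nz_1)
    show "expectation (N u) = 0"
      by (rule normal_distributed_expectation) fact+
  qed
  have "integrable M (\<lambda>\<omega>. N s \<omega> * N t \<omega>) \<and>
      expectation (\<lambda>\<omega>. N s \<omega> * N t \<omega>) = (if s = t then (\<sigma> t)\<^sup>2 else 0)"
  proof (cases "s = t")
    case True
    from normal[OF \<open>t \<in> S\<close>] have pos: "\<sigma> t > 0" and D: "distributed M lborel (N t) (normal_density 0 (\<sigma> t))"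
      by auto
    have "integrable M (\<lambda>\<omega>. (N t \<omega>)\<^sup>2)"
      using distributed_integrable[OF D, of "\<lambda>x. x\<^sup>2"] integrable_normal_moment[OF pos, of 0 2]
      by simp
    moreover have "expectation (\<lambda>\<omega>. (N t \<omega>)\<^sup>2) = (\<sigma> t)\<^sup>2"
      using normal_distributed_variance[OF pos D] centered[OF \<open>t \<in> S\<close>] by simp
    ultimately show ?thesis
      using True by (simp add: power2_eq_square)
  next
    case False
    have indep2: "indep_vars (\<lambda>_. borel) N {s, t}"
      using indep assms by (auto intro: indep_vars_subset)
    have "integrable M (\<lambda>\<omega>. \<Prod>u\<in>{s, t}. N u \<omega>)"
      by (rule indep_vars_integrable[OF _ indep2]) (use integrable assms in auto)
    moreover have "expectation (\<lambda>\<omega>. \<Prod>u\<in>{s, t}. N u \<omega>) = (\<Prod>u\<in>{s, t}. expectation (N u))"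
      by (rule indep_vars_lebesgue_integral[OF _ indep2]) (use integrable assms in auto)
    ultimately show ?thesis
      using False centered assms by simp
  qed
  then show "integrable M (\<lambda>\<omega>. N s \<omega> * N t \<omega>)"
    and "expectation (\<lambda>\<omega>. N s \<omega> * N t \<omega>) = (if s = t then (\<sigma> t)\<^sup>2 else 0)"
    by blast+
qed

lemma (in prob_space) indep_normal_sum_square:
  fixes N :: "'i \<Rightarrow> 'a \<Rightarrow> real"
  assumes "finite S" "S \<subseteq> I" "indep_vars (\<lambda>_. borel) N I"
    and "\<And>t. t \<in> S \<Longrightarrow> \<sigma> t > 0 \<and> distributed M lborel (N t) (normal_density 0 (\<sigma> t))"
  shows "integrable M (\<lambda>\<omega>. (\<Sum>t\<in>S. a t * N t \<omega>)\<^sup>2)"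
    and "expectation (\<lambda>\<omega>. (\<Sum>t\<in>S. a t * N t \<omega>)\<^sup>2) = (\<Sum>t\<in>S. (a t)\<^sup>2 * (\<sigma> t)\<^sup>2)"
proof -
  note mult = indep_normal_mult[OF assms(2-4)]
  have square: "(\<lambda>\<omega>. (\<Sum>t\<in>S. a t * N t \<omega>)\<^sup>2) = (\<lambda>\<omega>. \<Sum>s\<in>S. \<Sum>t\<in>S. (a s * a t) * (N s \<omega> * N t \<omega>))"
    by (simp add: power2_eq_square sum_product algebra_simps)
  then show "integrable M (\<lambda>\<omega>. (\<Sum>t\<in>S. a t * N t \<omega>)\<^sup>2)"
    using mult(1) by auto
  have "expectation (\<lambda>\<omega>. \<Sum>s\<in>S. \<Sum>t\<in>S. (a s * a t) * (N s \<omega> * N t \<omega>))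
      = (\<Sum>s\<in>S. \<Sum>t\<in>S. (a s * a t) * (if s = t then (\<sigma> t)\<^sup>2 else 0))"
    using mult by (simp add: integrable_sum)
  also have "\<dots> = (\<Sum>t\<in>S. (a t)\<^sup>2 * (\<sigma> t)\<^sup>2)"
    using \<open>finite S\<close> by (simp add: if_distrib power2_eq_square cong: if_cong)
  finally show "expectation (\<lambda>\<omega>. (\<Sum>t\<in>S. a t * N t \<omega>)\<^sup>2) = (\<Sum>t\<in>S. (a t)\<^sup>2 * (\<sigma> t)\<^sup>2)"
    unfolding square .
qed

section \<open>Weighted sums of squares\<close>

lemma sum_weighted_sq_dist_centroid:
  fixes z :: "'i \<Rightarrow> 'v::real_inner"
  assumes "finite S" and "(\<Sum>t\<in>S. a t) \<noteq> 0"
  defines "z0 \<equiv> (1 / (\<Sum>t\<in>S. a t)) *\<^sub>R (\<Sum>t\<in>S. a t *\<^sub>R z t)"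
  shows "(\<Sum>t\<in>S. a t * (norm (x - z t))\<^sup>2)
      = (\<Sum>t\<in>S. a t) * (norm (x - z0))\<^sup>2 + (\<Sum>t\<in>S. a t * (norm (z0 - z t))\<^sup>2)"
proof -
  have "(\<Sum>t\<in>S. a t *\<^sub>R z0) = (\<Sum>t\<in>S. a t) *\<^sub>R z0"
    by (simp add: scaleR_sum_left)
  also have "\<dots> = (\<Sum>t\<in>S. a t *\<^sub>R z t)"
    using assms(2) by (simp add: z0_def)
  finally have balanced: "(\<Sum>t\<in>S. a t *\<^sub>R (z0 - z t)) = 0"
    by (simp add: scaleR_right_diff_distrib sum_subtractf)
  have expand: "(norm (x - z t))\<^sup>2 = (norm (x - z0))\<^sup>2 + 2 * ((x - z0) \<bullet> (z0 - z t)) + (norm (z0 - z t))\<^sup>2" for t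
    by (simp add: power2_norm_eq_inner inner_diff_left inner_diff_right inner_commute)
  have "(\<Sum>t\<in>S. a t * (norm (x - z t))\<^sup>2)
      = (\<Sum>t\<in>S. a t * (norm (x - z0))\<^sup>2 + 2 * (a t * ((x - z0) \<bullet> (z0 - z t))) + a t * (norm (z0 - z t))\<^sup>2)"
    unfolding expand by (simp only: distrib_left mult.left_commute)
  also have "\<dots> = (\<Sum>t\<in>S. a t * (norm (x - z0))\<^sup>2) + 2 * ((x - z0) \<bullet> (\<Sum>t\<in>S. a t *\<^sub>R (z0 - z t)))
      + (\<Sum>t\<in>S. a t * (norm (z0 - z t))\<^sup>2)"
    by (simp only: sum.distrib sum_distrib_left[symmetric] inner_sum_right inner_scaleR_right)
  finally show ?thesis
    unfolding balanced by (simp add: sum_distrib_right)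
qed

lemma two_point_sq_dist:
  fixes x b w :: "'v::real_inner"
  assumes "p + q \<noteq> 0"
  defines "m \<equiv> (1 / (p + q)) *\<^sub>R (p *\<^sub>R b + q *\<^sub>R w)"
  shows "p * (norm (x - b))\<^sup>2 + q * (norm (x - w))\<^sup>2
      = (p + q) * (norm (x - m))\<^sup>2 + p * q / (p + q) * (norm (w - b))\<^sup>2"
proof -
  have centroid: "p * (norm (x - b))\<^sup>2 + q * (norm (x - w))\<^sup>2
      = (p + q) * (norm (x - m))\<^sup>2 + (p * (norm (m - b))\<^sup>2 + q * (norm (m - w))\<^sup>2)"
    using sum_weighted_sq_dist_centroid[where S=UNIV and a="\<lambda>t. if t then p else q"
        and z="\<lambda>t. if t then b else w" and x=x] assms
    by (simp add: UNIV_bool m_def add.commute)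
  have "m - b = (1 / (p + q)) *\<^sub>R (p *\<^sub>R b + q *\<^sub>R w - (p + q) *\<^sub>R b)"
    and "m - w = (1 / (p + q)) *\<^sub>R (p *\<^sub>R b + q *\<^sub>R w - (p + q) *\<^sub>R w)"
    using assms by (simp_all add: m_def scaleR_diff_right)
  then have mb: "m - b = (q / (p + q)) *\<^sub>R (w - b)" and mw: "m - w = (p / (p + q)) *\<^sub>R (b - w)"
    by (simp_all add: algebra_simps)
  have "p * (norm (m - b))\<^sup>2 + q * (norm (m - w))\<^sup>2 = (p * (q / (p + q))\<^sup>2 + q * (p / (p + q))\<^sup>2) * (norm (w - b))\<^sup>2"
    unfolding mb mw
    by (simp only: norm_scaleR power_mult_distrib power2_abs norm_minus_commute[of b w]) (simp add: algebra_simps)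
  also have "p * (q / (p + q))\<^sup>2 + q * (p / (p + q))\<^sup>2 = p * q * (p + q) / ((p + q) * (p + q))"
    by (simp add: power2_eq_square algebra_simps add_divide_distrib)
  also have "\<dots> = p * q / (p + q)"
    using assms by simp
  finally show ?thesis
    unfolding centroid by simp
qed

lemma sum_weighted_square_add_ge:
  fixes x y :: "'i \<Rightarrow> real"
  assumes "\<And>t. t \<in> T \<Longrightarrow> a t \<ge> 0"
  shows "(\<Sum>t\<in>T. a t * (x t)\<^sup>2) + 2 * (\<Sum>t\<in>T. a t * x t * y t) \<le> (\<Sum>t\<in>T. a t * (x t + y t)\<^sup>2)"
proof -
  have "a t * (x t)\<^sup>2 + 2 * (a t * x t * y t) \<le> a t * (x t + y t)\<^sup>2" if "t \<in> T" for t
  proof -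
    have "a t * (x t + y t)\<^sup>2 = a t * (x t)\<^sup>2 + 2 * (a t * x t * y t) + a t * (y t)\<^sup>2"
      by (simp add: power2_sum algebra_simps)
    then show ?thesis
      using assms[OF that] by simp
  qed
  then show ?thesis
    by (simp add: sum_distrib_left sum.distrib[symmetric] sum_mono)
qed

section \<open>Shrinkage weights and their risk\<close>

locale hier_weights =
  fixes n k :: nat and c :: "nat \<Rightarrow> nat" and sbar :: real and sc v :: "nat \<Rightarrow> real" and i :: nat
  assumes clus: "\<forall>l<n. c l < k" and nonempty: "\<forall>j<k. \<exists>l<n. c l = j"
    and sbar_pos: "sbar > 0" and sc_pos: "\<forall>j<k. sc j > 0" and v_pos: "\<forall>l<n. v l > 0"
    and i_lt: "i < n"
begin

definition cluster :: "nat \<Rightarrow> nat set" where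
  "cluster j = {l. l < n \<and> c l = j}"

text \<open>v l is the variance of the local estimate of client l around its own parameter, so \<kappa> l
  is its precision as an estimate of the parameter of its cluster, K j the total precision of
  cluster j, and \<rho> j the precision of the \<kappa>-weighted mean of cluster j as an estimate of the
  global parameter. The hierarchical estimate of client i shrinks its local estimate (weight \<alpha>)
  towards an estimate of its cluster parameter, which shrinks the mean of cluster c i (weight \<gamma>)
  towards the \<rho>-weighted mean of all cluster means; hcoef l is the resulting weight of the
  local estimate of client l.\<close>

definition \<kappa> :: "nat \<Rightarrow> real" where
  "\<kappa> l = 1 / (v l + (sc (c l))\<^sup>2)"

definition K :: "nat \<Rightarrow> real" where
  "K j = (\<Sum>l\<in>cluster j. \<kappa> l)"

definition \<rho> :: "nat \<Rightarrow> real" where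
  "\<rho> j = 1 / (1 / K j + sbar\<^sup>2)"

definition R :: real where
  "R = (\<Sum>j<k. \<rho> j)"

definition \<alpha> :: real where
  "\<alpha> = (sc (c i))\<^sup>2 / (v i + (sc (c i))\<^sup>2)"

definition \<gamma> :: real where
  "\<gamma> = sbar\<^sup>2 * \<rho> (c i)"

definition hcoef :: "nat \<Rightarrow> real" where
  "hcoef l = (if l = i then \<alpha> else 0)
     + (1 - \<alpha>) * ((if c l = c i then \<gamma> * \<kappa> l / K (c i) else 0) + (1 - \<gamma>) * \<rho> (c l) * \<kappa> l / (K (c l) * R))"

lemma finite_cluster [simp]: "finite (cluster j)"
  by (simp add: cluster_def)

lemma c_i_lt: "c i < k"
  using clus i_lt by simp

lemma mem_cluster_self: "i \<in> cluster (c i)"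
  using i_lt by (simp add: cluster_def)

lemma sum_clusters: "(\<Sum>j<k. \<Sum>l\<in>cluster j. f l j) = (\<Sum>l<n. f l (c l))"
proof -
  have "(\<Sum>j<k. \<Sum>l\<in>cluster j. f l j) = (\<Sum>j<k. \<Sum>l\<in>{l. l \<in> {..<n} \<and> c l = j}. f l (c l))"
    by (intro sum.cong) (auto simp: cluster_def)
  also have "\<dots> = (\<Sum>l<n. f l (c l))"
    using clus by (intro sum.group) auto
  finally show ?thesis .
qed

lemma \<kappa>_pos: "l < n \<Longrightarrow> \<kappa> l > 0"
  using v_pos clus sc_pos by (simp add: \<kappa>_def add_pos_nonneg)

lemma K_pos: "j < k \<Longrightarrow> K j > 0"
proof -
  assume "j < k"
  then obtain l where "l \<in> cluster j"
    using nonempty by (auto simp: cluster_def)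
  then show ?thesis
    unfolding K_def using \<kappa>_pos by (intro sum_pos) (auto simp: cluster_def)
qed

lemma \<rho>_pos: "j < k \<Longrightarrow> \<rho> j > 0"
  using K_pos[of j] by (simp add: \<rho>_def add_pos_nonneg)

lemma R_pos: "R > 0"
  unfolding R_def using \<rho>_pos c_i_lt by (intro sum_pos) auto

lemma \<kappa>_inverse: "l < n \<Longrightarrow> \<kappa> l * ((sc (c l))\<^sup>2 + v l) = 1"
  using \<kappa>_pos[of l] by (simp add: \<kappa>_def add.commute)

lemma \<rho>_inverse: "j < k \<Longrightarrow> \<rho> j * (sbar\<^sup>2 + 1 / K j) = 1"
  using \<rho>_pos[of j] by (simp add: \<rho>_def add.commute)

lemma \<alpha>_eq: "\<alpha> * ((sc (c i))\<^sup>2 + v i) = (sc (c i))\<^sup>2"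
proof -
  have "v i + (sc (c i))\<^sup>2 > 0"
    using v_pos i_lt by (simp add: add_pos_nonneg)
  then show ?thesis
    by (simp add: \<alpha>_def add.commute)
qed

lemma \<gamma>_eq: "\<gamma> / K (c i) = sbar\<^sup>2 * (1 - \<gamma>)"
proof -
  have pos: "K (c i) > 0" "1 + sbar\<^sup>2 * K (c i) > 0"
    using K_pos[OF c_i_lt] by (simp_all add: add_pos_nonneg)
  then have "\<gamma> = sbar\<^sup>2 * K (c i) / (1 + sbar\<^sup>2 * K (c i))"
    by (simp add: \<gamma>_def \<rho>_def field_simps)
  then show ?thesis
    using pos by (simp add: field_simps)
qed

lemma sum_hcoef_cluster:
  assumes "j < k"
  shows "(\<Sum>l\<in>cluster j. hcoef l) = (if j = c i then \<alpha> + (1 - \<alpha>) * \<gamma> else 0) + (1 - \<alpha>) * (1 - \<gamma>) * \<rho> j / R"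
proof -
  have K: "K j > 0"
    using K_pos assms by simp
  have own: "(\<Sum>l\<in>cluster j. (if l = i then \<alpha> else 0)) = (if j = c i then \<alpha> else 0)"
    using i_lt by (auto simp: cluster_def)
  have local: "(\<Sum>l\<in>cluster j. (if c l = c i then \<gamma> * \<kappa> l / K (c i) else 0)) = (if j = c i then \<gamma> else 0)"
  proof (cases "j = c i")
    case True
    then have "(\<Sum>l\<in>cluster j. (if c l = c i then \<gamma> * \<kappa> l / K (c i) else 0)) = \<gamma> / K j * K j"
      by (simp add: K_def sum_distrib_left cluster_def)
    then show ?thesis
      using K True by simp
  qed (auto simp: cluster_def)
  have global: "(\<Sum>l\<in>cluster j. (1 - \<gamma>) * \<rho> (c l) * \<kappa> l / (K (c l) * R)) = (1 - \<gamma>) * \<rho> j / R"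
  proof -
    have "(\<Sum>l\<in>cluster j. (1 - \<gamma>) * \<rho> (c l) * \<kappa> l / (K (c l) * R)) = (1 - \<gamma>) * \<rho> j / (K j * R) * K j"
      by (simp add: K_def sum_distrib_left cluster_def)
    then show ?thesis
      using K R_pos by simp
  qed
  show ?thesis
    unfolding hcoef_def sum.distrib sum_distrib_left[symmetric] own local global
    by (simp add: algebra_simps)
qed

lemma sum_hcoef: "(\<Sum>l<n. hcoef l) = 1"
proof -
  have "(\<Sum>l<n. hcoef l) = (\<Sum>j<k. \<Sum>l\<in>cluster j. hcoef l)"
    by (rule sum_clusters[symmetric])
  also have "\<dots> = (\<alpha> + (1 - \<alpha>) * \<gamma>) + (1 - \<alpha>) * (1 - \<gamma>) * R / R"
    using c_i_lt
    by (simp add: sum_hcoef_cluster sum.distrib sum_divide_distrib[symmetric] sum_distrib_left[symmetric] R_def)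
  also have "\<dots> = (\<alpha> + (1 - \<alpha>) * \<gamma>) + (1 - \<alpha>) * (1 - \<gamma>)"
    using R_pos by simp
  also have "\<dots> = 1"
    by (simp add: algebra_simps)
  finally show ?thesis .
qed

text \<open>For weights w summing to one, CARD('d) * risk w is the mean squared error of the
  w-combination of the local estimates for the parameter of client i; the three sums are the
  contributions of the cluster, client and observation noise. risk_grad w is half the gradient
  of risk at w.\<close>

definition risk :: "(nat \<Rightarrow> real) \<Rightarrow> real" where
  "risk w = sbar\<^sup>2 * (\<Sum>j<k. ((\<Sum>l\<in>cluster j. w l) - (if j = c i then 1 else 0))\<^sup>2)
     + (\<Sum>l<n. (sc (c l))\<^sup>2 * (w l - (if l = i then 1 else 0))\<^sup>2) + (\<Sum>l<n. v l * (w l)\<^sup>2)"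

definition risk_grad :: "(nat \<Rightarrow> real) \<Rightarrow> nat \<Rightarrow> real" where
  "risk_grad w l = sbar\<^sup>2 * ((\<Sum>l'\<in>cluster (c l). w l') - (if c l = c i then 1 else 0))
     + (sc (c l))\<^sup>2 * (w l - (if l = i then 1 else 0)) + v l * w l"

lemma risk_linearization_le: "risk w + 2 * (\<Sum>l<n. risk_grad w l * d l) \<le> risk (\<lambda>l. w l + d l)"
proof -
  define e where "e j = (if j = c i then 1 else 0 :: real)" for j
  define x where "x j = (\<Sum>l\<in>cluster j. w l) - e j" for j
  define y where "y j = (\<Sum>l\<in>cluster j. d l)" for j
  have cluster_part: "(\<Sum>j<k. sbar\<^sup>2 * x j * y j) = (\<Sum>l<n. sbar\<^sup>2 * x (c l) * d l)"
    unfolding y_def sum_distrib_left by (rule sum_clusters)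
  have "(\<Sum>j<k. sbar\<^sup>2 * (x j)\<^sup>2) + 2 * (\<Sum>j<k. sbar\<^sup>2 * x j * y j) \<le> (\<Sum>j<k. sbar\<^sup>2 * (x j + y j)\<^sup>2)"
    by (rule sum_weighted_square_add_ge) simp
  moreover have "(\<Sum>l<n. (sc (c l))\<^sup>2 * (w l - (if l = i then 1 else 0))\<^sup>2)
      + 2 * (\<Sum>l<n. (sc (c l))\<^sup>2 * (w l - (if l = i then 1 else 0)) * d l)
      \<le> (\<Sum>l<n. (sc (c l))\<^sup>2 * (w l - (if l = i then 1 else 0) + d l)\<^sup>2)"
    by (rule sum_weighted_square_add_ge) simp
  moreover have "(\<Sum>l<n. v l * (w l)\<^sup>2) + 2 * (\<Sum>l<n. v l * w l * d l) \<le> (\<Sum>l<n. v l * (w l + d l)\<^sup>2)"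
    using v_pos by (intro sum_weighted_square_add_ge) auto
  moreover have "(\<Sum>l<n. risk_grad w l * d l) = (\<Sum>l<n. sbar\<^sup>2 * x (c l) * d l)
      + (\<Sum>l<n. (sc (c l))\<^sup>2 * (w l - (if l = i then 1 else 0)) * d l) + (\<Sum>l<n. v l * w l * d l)"
    by (simp add: risk_grad_def x_def e_def sum.distrib[symmetric] algebra_simps)
  moreover have "x j + y j = (\<Sum>l\<in>cluster j. w l + d l) - e j" for j
    by (simp add: x_def y_def sum.distrib)
  ultimately show ?thesis
    unfolding risk_def cluster_part[symmetric] by (simp add: x_def e_def sum_distrib_left algebra_simps)
qed

text \<open>The Lagrange condition for minimising risk subject to \<Sum>l<n. w l = 1.\<close>

lemma risk_grad_hcoef:
  assumes "l < n"
  shows "risk_grad hcoef l = (1 - \<alpha>) * (1 - \<gamma>) / R"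
proof -
  have cl: "c l < k"
    using clus assms by simp
  define z where "z = (1 - \<alpha>) * ((if c l = c i then \<gamma> / K (c i) else 0) + (1 - \<gamma>) * \<rho> (c l) / (K (c l) * R))"
  have "hcoef l = (if l = i then \<alpha> else 0) + \<kappa> l * z"
    unfolding hcoef_def z_def by (simp add: algebra_simps)
  then have "((sc (c l))\<^sup>2 + v l) * hcoef l
      = ((sc (c l))\<^sup>2 + v l) * (if l = i then \<alpha> else 0) + (\<kappa> l * ((sc (c l))\<^sup>2 + v l)) * z"
    by (simp add: algebra_simps)
  also have "\<dots> = (if l = i then (sc (c i))\<^sup>2 else 0) + z"
    using \<kappa>_inverse[OF assms] \<alpha>_eq by (simp add: mult.commute)
  finally have own: "((sc (c l))\<^sup>2 + v l) * hcoef l = (if l = i then (sc (c i))\<^sup>2 else 0) + z" .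
  have "risk_grad hcoef l
      = sbar\<^sup>2 * ((if c l = c i then \<alpha> + (1 - \<alpha>) * \<gamma> else 0) + (1 - \<alpha>) * (1 - \<gamma>) * \<rho> (c l) / R
          - (if c l = c i then 1 else 0))
        + ((sc (c l))\<^sup>2 + v l) * hcoef l - (if l = i then (sc (c i))\<^sup>2 else 0)"
    using sum_hcoef_cluster[OF cl] by (simp add: risk_grad_def algebra_simps)
  also have "\<dots> = (if c l = c i then (1 - \<alpha>) * (\<gamma> / K (c i) - sbar\<^sup>2 * (1 - \<gamma>)) else 0)
      + (1 - \<alpha>) * (1 - \<gamma>) / R * (\<rho> (c l) * (sbar\<^sup>2 + 1 / K (c l)))"
    unfolding own z_def using K_pos[OF cl] R_pos by (auto simp: field_simps)
  also have "\<dots> = (1 - \<alpha>) * (1 - \<gamma>) / R"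
    unfolding \<gamma>_eq \<rho>_inverse[OF cl] by simp
  finally show ?thesis .
qed

lemma risk_hcoef_le:
  assumes "(\<Sum>l<n. w l) = 1"
  shows "risk hcoef \<le> risk w"
proof -
  have "(\<Sum>l<n. risk_grad hcoef l * (w l - hcoef l)) = (1 - \<alpha>) * (1 - \<gamma>) / R * (\<Sum>l<n. w l - hcoef l)"
    by (simp add: risk_grad_hcoef sum_distrib_left)
  also have "\<dots> = 0"
    using assms sum_hcoef by (simp add: sum_subtractf)
  finally show ?thesis
    using risk_linearization_le[of hcoef "\<lambda>l. w l - hcoef l"] by simp
qed

section \<open>The hierarchical objective\<close>

definition prec_data :: "nat \<Rightarrow> real" where
  "prec_data l = 1 / v l"

definition prec_client :: "nat \<Rightarrow> real" where
  "prec_client j = 1 / (sc j)\<^sup>2"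

definition prec_cluster :: real where
  "prec_cluster = 1 / sbar\<^sup>2"

text \<open>When b l is the local estimate of client l, the hierarchical objective equals obj b up to
  a term not depending on the parameters, since the data term of client l is then a multiple of
  the squared distance to b l.\<close>

definition obj :: "(nat \<Rightarrow> 'v::real_inner) \<Rightarrow> (nat \<Rightarrow> 'v) \<Rightarrow> (nat \<Rightarrow> 'v) \<Rightarrow> 'v \<Rightarrow> real" where
  "obj b \<theta> w wb = (\<Sum>j<k. prec_cluster / 2 * (norm (w j - wb))\<^sup>2
     + (\<Sum>l\<in>cluster j. prec_data l / 2 * (norm (\<theta> l - b l))\<^sup>2 + prec_client j / 2 * (norm (\<theta> l - w j))\<^sup>2))"

definition cluster_mean :: "(nat \<Rightarrow> 'v::real_inner) \<Rightarrow> nat \<Rightarrow> 'v" where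
  "cluster_mean b j = (1 / K j) *\<^sub>R (\<Sum>l\<in>cluster j. \<kappa> l *\<^sub>R b l)"

definition global_mean :: "(nat \<Rightarrow> 'v::real_inner) \<Rightarrow> 'v" where
  "global_mean b = (1 / R) *\<^sub>R (\<Sum>j<k. \<rho> j *\<^sub>R cluster_mean b j)"

definition cluster_center :: "(nat \<Rightarrow> 'v::real_inner) \<Rightarrow> 'v \<Rightarrow> nat \<Rightarrow> 'v" where
  "cluster_center b wb j =
     (1 / (K j + prec_cluster)) *\<^sub>R (K j *\<^sub>R cluster_mean b j + prec_cluster *\<^sub>R wb)"

definition client_center :: "(nat \<Rightarrow> 'v::real_inner) \<Rightarrow> (nat \<Rightarrow> 'v) \<Rightarrow> nat \<Rightarrow> 'v" where
  "client_center b w l =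
     (1 / (prec_data l + prec_client (c l))) *\<^sub>R (prec_data l *\<^sub>R b l + prec_client (c l) *\<^sub>R w (c l))"

definition obj_excess :: "(nat \<Rightarrow> 'v::real_inner) \<Rightarrow> (nat \<Rightarrow> 'v) \<Rightarrow> (nat \<Rightarrow> 'v) \<Rightarrow> 'v \<Rightarrow> real" where
  "obj_excess b \<theta> w wb =
     (\<Sum>j<k. \<Sum>l\<in>cluster j. (prec_data l + prec_client j) / 2 * (norm (\<theta> l - client_center b w l))\<^sup>2)
     + (\<Sum>j<k. (K j + prec_cluster) / 2 * (norm (w j - cluster_center b wb j))\<^sup>2)
     + R / 2 * (norm (wb - global_mean b))\<^sup>2"

definition obj_residual :: "(nat \<Rightarrow> 'v::real_inner) \<Rightarrow> real" where
  "obj_residual b =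
     (\<Sum>j<k. \<Sum>l\<in>cluster j. \<kappa> l / 2 * (norm (cluster_mean b j - b l))\<^sup>2)
     + (\<Sum>j<k. \<rho> j / 2 * (norm (global_mean b - cluster_mean b j))\<^sup>2)"

lemma prec_data_pos: "l < n \<Longrightarrow> prec_data l > 0"
  using v_pos by (simp add: prec_data_def)

lemma prec_client_pos: "j < k \<Longrightarrow> prec_client j > 0"
proof -
  assume "j < k"
  then have "sc j > 0"
    using sc_pos by simp
  then show ?thesis
    by (simp add: prec_client_def)
qed

lemma prec_cluster_pos: "prec_cluster > 0"
  using sbar_pos by (simp add: prec_cluster_def)

lemma \<kappa>_eq_prec:
  assumes "l < n"
  shows "prec_data l * prec_client (c l) / (prec_data l + prec_client (c l)) = \<kappa> l"
proof -
  have "v l > 0" "sc (c l) > 0"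
    using assms v_pos clus sc_pos by auto
  then show ?thesis
    by (simp add: prec_data_def prec_client_def \<kappa>_def field_simps)
qed

lemma \<rho>_eq_prec: "j < k \<Longrightarrow> K j * prec_cluster / (K j + prec_cluster) = \<rho> j"
  using K_pos[of j] sbar_pos by (simp add: prec_cluster_def \<rho>_def field_simps)

lemma obj_cluster_eq:
  fixes b \<theta> w :: "nat \<Rightarrow> 'v::real_inner"
  assumes j: "j < k"
  shows "prec_cluster / 2 * (norm (w j - wb))\<^sup>2
      + (\<Sum>l\<in>cluster j. prec_data l / 2 * (norm (\<theta> l - b l))\<^sup>2 + prec_client j / 2 * (norm (\<theta> l - w j))\<^sup>2)
    = (\<Sum>l\<in>cluster j. (prec_data l + prec_client j) / 2 * (norm (\<theta> l - client_center b w l))\<^sup>2)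
      + (K j + prec_cluster) / 2 * (norm (w j - cluster_center b wb j))\<^sup>2
      + \<rho> j / 2 * (norm (wb - cluster_mean b j))\<^sup>2
      + (\<Sum>l\<in>cluster j. \<kappa> l / 2 * (norm (cluster_mean b j - b l))\<^sup>2)"
proof -
  have "prec_data l / 2 * (norm (\<theta> l - b l))\<^sup>2 + prec_client j / 2 * (norm (\<theta> l - w j))\<^sup>2
      = (prec_data l + prec_client j) / 2 * (norm (\<theta> l - client_center b w l))\<^sup>2
        + \<kappa> l / 2 * (norm (w j - b l))\<^sup>2" if "l \<in> cluster j" for l
  proof -
    from that have l: "l < n" "c l = j"
      by (auto simp: cluster_def)
    have \<kappa>: "prec_data l * prec_client j / (prec_data l + prec_client j) = \<kappa> l"
      using \<kappa>_eq_prec[OF l(1)] l(2) by simp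
    have "prec_data l + prec_client j \<noteq> 0"
      using prec_data_pos prec_client_pos j l by (metis add_pos_pos less_irrefl)
    from two_point_sq_dist[OF this, of "\<theta> l" "b l" "w j"] show ?thesis
      unfolding \<kappa> client_center_def l(2) by linarith
  qed
  then have clients: "(\<Sum>l\<in>cluster j. prec_data l / 2 * (norm (\<theta> l - b l))\<^sup>2 + prec_client j / 2 * (norm (\<theta> l - w j))\<^sup>2)
      = (\<Sum>l\<in>cluster j. (prec_data l + prec_client j) / 2 * (norm (\<theta> l - client_center b w l))\<^sup>2)
        + (\<Sum>l\<in>cluster j. \<kappa> l / 2 * (norm (w j - b l))\<^sup>2)"
    by (simp add: sum.distrib)
  have "K j \<noteq> 0"
    using K_pos[OF j] by simp
  from sum_weighted_sq_dist_centroid[OF finite_cluster this[unfolded K_def], of "w j" b]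
  have "(\<Sum>l\<in>cluster j. \<kappa> l / 2 * (norm (w j - b l))\<^sup>2)
      = K j / 2 * (norm (w j - cluster_mean b j))\<^sup>2 + (\<Sum>l\<in>cluster j. \<kappa> l / 2 * (norm (cluster_mean b j - b l))\<^sup>2)"
    by (simp add: K_def[symmetric] cluster_mean_def sum_divide_distrib[symmetric])
  moreover have "K j + prec_cluster \<noteq> 0"
    using K_pos[OF j] prec_cluster_pos by simp
  from two_point_sq_dist[OF this, of "w j" "cluster_mean b j" wb]
  have "K j / 2 * (norm (w j - cluster_mean b j))\<^sup>2 + prec_cluster / 2 * (norm (w j - wb))\<^sup>2
      = (K j + prec_cluster) / 2 * (norm (w j - cluster_center b wb j))\<^sup>2 + \<rho> j / 2 * (norm (wb - cluster_mean b j))\<^sup>2"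
    unfolding \<rho>_eq_prec[OF j] cluster_center_def by linarith
  ultimately show ?thesis
    unfolding clients by linarith
qed

lemma obj_eq_excess_residual: "obj b \<theta> w wb = obj_excess b \<theta> w wb + obj_residual b"
proof -
  have "R \<noteq> 0"
    using R_pos by simp
  from sum_weighted_sq_dist_centroid[OF finite_lessThan this[unfolded R_def], of wb "cluster_mean b"]
  have "(\<Sum>j<k. \<rho> j / 2 * (norm (wb - cluster_mean b j))\<^sup>2)
      = R / 2 * (norm (wb - global_mean b))\<^sup>2 + (\<Sum>j<k. \<rho> j / 2 * (norm (global_mean b - cluster_mean b j))\<^sup>2)"
    by (simp add: R_def[symmetric] global_mean_def sum_divide_distrib[symmetric])
  moreover have "obj b \<theta> w wb
      = (\<Sum>j<k. \<Sum>l\<in>cluster j. (prec_data l + prec_client j) / 2 * (norm (\<theta> l - client_center b w l))\<^sup>2)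
        + (\<Sum>j<k. (K j + prec_cluster) / 2 * (norm (w j - cluster_center b wb j))\<^sup>2)
        + (\<Sum>j<k. \<rho> j / 2 * (norm (wb - cluster_mean b j))\<^sup>2)
        + (\<Sum>j<k. \<Sum>l\<in>cluster j. \<kappa> l / 2 * (norm (cluster_mean b j - b l))\<^sup>2)"
    unfolding obj_def sum.distrib[symmetric] by (intro sum.cong refl obj_cluster_eq) simp
  ultimately show ?thesis
    unfolding obj_excess_def obj_residual_def by linarith
qed

lemma obj_excess_ge:
  "obj_excess b \<theta> w wb \<ge> (prec_data i + prec_client (c i)) / 2 * (norm (\<theta> i - client_center b w i))\<^sup>2
     + (K (c i) + prec_cluster) / 2 * (norm (w (c i) - cluster_center b wb (c i)))\<^sup>2
     + R / 2 * (norm (wb - global_mean b))\<^sup>2"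
proof -
  have clients_nonneg: "0 \<le> (prec_data l + prec_client j) / 2 * (norm (\<theta> l - client_center b w l))\<^sup>2"
    if "j < k" "l \<in> cluster j" for j l
    using that prec_data_pos prec_client_pos by (simp add: cluster_def add_pos_pos less_imp_le)
  have "(prec_data i + prec_client (c i)) / 2 * (norm (\<theta> i - client_center b w i))\<^sup>2
      \<le> (\<Sum>l\<in>cluster (c i). (prec_data l + prec_client (c i)) / 2 * (norm (\<theta> l - client_center b w l))\<^sup>2)"
    using mem_cluster_self c_i_lt clients_nonneg by (intro member_le_sum) auto
  also have "\<dots> \<le> (\<Sum>j<k. \<Sum>l\<in>cluster j. (prec_data l + prec_client j) / 2 * (norm (\<theta> l - client_center b w l))\<^sup>2)"
    using c_i_lt clients_nonneg by (intro member_le_sum sum_nonneg) auto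
  moreover have "(K (c i) + prec_cluster) / 2 * (norm (w (c i) - cluster_center b wb (c i)))\<^sup>2
      \<le> (\<Sum>j<k. (K j + prec_cluster) / 2 * (norm (w j - cluster_center b wb j))\<^sup>2)"
    using c_i_lt K_pos prec_cluster_pos by (intro member_le_sum) (auto simp: add_pos_pos less_imp_le)
  ultimately show ?thesis
    unfolding obj_excess_def by linarith
qed

lemma obj_excess_lower_nonneg:
  "0 \<le> (prec_data i + prec_client (c i)) / 2 * (norm x)\<^sup>2"
  "0 \<le> (K (c i) + prec_cluster) / 2 * (norm y)\<^sup>2"
  "0 \<le> R / 2 * (norm z)\<^sup>2"
  using prec_data_pos[OF i_lt] prec_client_pos[OF c_i_lt] K_pos[OF c_i_lt] prec_cluster_pos R_pos
  by simp_all

lemma obj_excess_nonneg: "obj_excess b \<theta> w wb \<ge> 0"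
  using obj_excess_ge[where b=b and \<theta>=\<theta> and w=w and wb=wb] obj_excess_lower_nonneg by (smt (verit))

definition opt_cluster :: "(nat \<Rightarrow> 'v::real_inner) \<Rightarrow> nat \<Rightarrow> 'v" where
  "opt_cluster b = cluster_center b (global_mean b)"

definition opt_client :: "(nat \<Rightarrow> 'v::real_inner) \<Rightarrow> nat \<Rightarrow> 'v" where
  "opt_client b = client_center b (opt_cluster b)"

lemma obj_excess_opt: "obj_excess b (opt_client b) (opt_cluster b) (global_mean b) = 0"
  by (simp add: obj_excess_def opt_client_def opt_cluster_def)

lemma obj_opt_le: "obj b (opt_client b) (opt_cluster b) (global_mean b) \<le> obj b \<theta> w wb"
  using obj_excess_nonneg[of b \<theta> w wb] by (simp add: obj_eq_excess_residual obj_excess_opt)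

lemma obj_minimizer_client_eq:
  assumes "obj b \<theta> w wb \<le> obj b (opt_client b) (opt_cluster b) (global_mean b)"
  shows "\<theta> i = opt_client b i"
proof -
  have "obj_excess b \<theta> w wb \<le> 0"
    using assms by (simp add: obj_eq_excess_residual obj_excess_opt)
  then have "(prec_data i + prec_client (c i)) / 2 * (norm (\<theta> i - client_center b w i))\<^sup>2 = 0"
    and "(K (c i) + prec_cluster) / 2 * (norm (w (c i) - cluster_center b wb (c i)))\<^sup>2 = 0"
    and "R / 2 * (norm (wb - global_mean b))\<^sup>2 = 0"
    using obj_excess_ge[where b=b and \<theta>=\<theta> and w=w and wb=wb] obj_excess_lower_nonneg by (smt (verit))+
  then have "\<theta> i = client_center b w i" "w (c i) = opt_cluster b (c i)"
    using prec_data_pos[OF i_lt] prec_client_pos[OF c_i_lt] K_pos[OF c_i_lt] prec_cluster_pos R_pos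
    by (simp_all add: opt_cluster_def add_pos_pos)
  then show ?thesis
    by (simp add: opt_client_def client_center_def)
qed

lemma opt_client_shrinkage:
  "opt_client b i = \<alpha> *\<^sub>R b i + (1 - \<alpha>) *\<^sub>R (\<gamma> *\<^sub>R cluster_mean b (c i) + (1 - \<gamma>) *\<^sub>R global_mean b)"
proof -
  have pos: "v i > 0" "sc (c i) > 0" "K (c i) > 0" "v i + (sc (c i))\<^sup>2 > 0" "1 + sbar\<^sup>2 * K (c i) > 0"
    using v_pos sc_pos i_lt c_i_lt K_pos[OF c_i_lt] by (auto intro: add_pos_nonneg)
  have "prec_data i / (prec_data i + prec_client (c i)) = \<alpha>"
    and "prec_client (c i) / (prec_data i + prec_client (c i)) = 1 - \<alpha>"
    using pos by (simp_all add: prec_data_def prec_client_def \<alpha>_def field_simps)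
  moreover have "K (c i) / (K (c i) + prec_cluster) = \<gamma>"
    and "prec_cluster / (K (c i) + prec_cluster) = 1 - \<gamma>"
    using pos sbar_pos by (simp_all add: prec_cluster_def \<gamma>_def \<rho>_def field_simps)
  moreover have "opt_client b i = (prec_data i / (prec_data i + prec_client (c i))) *\<^sub>R b i
      + (prec_client (c i) / (prec_data i + prec_client (c i))) *\<^sub>R opt_cluster b (c i)"
    and "opt_cluster b (c i) = (K (c i) / (K (c i) + prec_cluster)) *\<^sub>R cluster_mean b (c i)
      + (prec_cluster / (K (c i) + prec_cluster)) *\<^sub>R global_mean b"
    by (simp_all add: opt_client_def opt_cluster_def client_center_def cluster_center_def scaleR_add_right)
  ultimately show ?thesis
    by simp
qed

lemma opt_client_eq_hcoef: "opt_client b i = (\<Sum>l<n. hcoef l *\<^sub>R b l)"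
proof -
  define f where "f l = (if c l = c i then \<kappa> l / K (c i) else 0)" for l
  define g where "g l = \<rho> (c l) * \<kappa> l / (K (c l) * R)" for l
  have "(\<Sum>l<n. f l *\<^sub>R b l) = (\<Sum>l<n. if c l = c i then (\<kappa> l / K (c i)) *\<^sub>R b l else 0)"
    by (intro sum.cong) (auto simp: f_def)
  also have "\<dots> = (\<Sum>l\<in>{l\<in>{..<n}. c l = c i}. (\<kappa> l / K (c i)) *\<^sub>R b l)"
    by (rule sum.inter_filter[symmetric]) simp
  finally have "cluster_mean b (c i) = (\<Sum>l<n. f l *\<^sub>R b l)"
    by (simp add: cluster_mean_def cluster_def scaleR_sum_right)
  moreover have "global_mean b = (\<Sum>l<n. g l *\<^sub>R b l)"
    using sum_clusters[of "\<lambda>l j. (\<rho> j * \<kappa> l / (K j * R)) *\<^sub>R b l"]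
    by (simp add: global_mean_def cluster_mean_def scaleR_sum_right g_def mult.commute)
  moreover have "\<alpha> *\<^sub>R b i = (\<Sum>l<n. (if l = i then \<alpha> else 0) *\<^sub>R b l)"
    using i_lt by (simp add: if_distrib[of "\<lambda>t. t *\<^sub>R _"] cong: if_cong)
  moreover have "hcoef l = (if l = i then \<alpha> else 0) + (1 - \<alpha>) * \<gamma> * f l + (1 - \<alpha>) * (1 - \<gamma>) * g l" for l
    using K_pos[OF c_i_lt] by (cases "c l = c i") (simp_all add: hcoef_def f_def g_def field_simps)
  ultimately show ?thesis
    unfolding opt_client_shrinkage
    by (simp only: scaleR_add_left scaleR_add_right sum.distrib scaleR_sum_right scaleR_scaleR mult.assoc add.assoc)
qed

end

section \<open>Designs with scalar Gram matrices\<close>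

lemma mat_mult_vector: "(mat a :: real^'n^'n) *v x = a *\<^sub>R x"
  by (simp add: vec_eq_iff matrix_vector_mult_def mat_def if_distrib[of "\<lambda>t. t * _"] cong: if_cong)

lemma matrix_inv_mat_mult_vector:
  assumes "a \<noteq> 0"
  shows "matrix_inv (mat a :: real^'n^'n) *v x = (1 / a) *\<^sub>R x"
proof -
  have "\<exists>A'::real^'n^'n. mat a ** A' = mat 1 \<and> A' ** mat a = mat 1"
    by (rule exI[of _ "mat (1 / a)"]) (simp add: vec_eq_iff matrix_matrix_mult_def mat_def if_distrib[of "\<lambda>t. t * _"] assms cong: if_cong)
  then have "matrix_inv (mat a :: real^'n^'n) ** mat a = mat 1"
    unfolding matrix_inv_def by (rule someI2_ex) blast
  then have "matrix_inv (mat a :: real^'n^'n) *v (mat a *v ((1 / a) *\<^sub>R x)) = (1 / a) *\<^sub>R x"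
    by (simp add: matrix_vector_mul_assoc)
  then show ?thesis
    using assms by (simp add: mat_mult_vector)
qed

lemma gram_mult_vector:
  assumes "gram X m l = mat b"
  shows "(\<Sum>r<m l. (X l r \<bullet> \<theta>) *\<^sub>R X l r) = b *\<^sub>R (\<theta> :: real^'d)"
proof -
  have "(\<Sum>r<m l. (X l r \<bullet> \<theta>) *\<^sub>R X l r) $ a = (\<Sum>a'\<in>UNIV. \<theta> $ a' * gram X m l $ a $ a')" for a
    by (simp add: gram_def inner_vec_def sum_distrib_left mult_ac sum.swap[of _ "{..<_}"])
  then show ?thesis
    by (simp add: vec_eq_iff assms mat_def if_distrib cong: if_cong)
qed

lemma sum_sq_residual_gram:
  fixes \<theta> :: "real^'d" and y :: "nat \<Rightarrow> real"
  assumes "gram X m l = mat b" and "b > 0"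
  defines "g \<equiv> (\<Sum>r<m l. y r *\<^sub>R X l r)"
  shows "(\<Sum>r<m l. (y r - X l r \<bullet> \<theta>)\<^sup>2)
      = b * (norm (\<theta> - (1 / b) *\<^sub>R g))\<^sup>2 + ((\<Sum>r<m l. (y r)\<^sup>2) - (norm g)\<^sup>2 / b)"
proof -
  have quadratic: "(\<Sum>r<m l. (X l r \<bullet> \<theta>)\<^sup>2) = b * (\<theta> \<bullet> \<theta>)"
  proof -
    have "(\<Sum>r<m l. (X l r \<bullet> \<theta>)\<^sup>2) = \<theta> \<bullet> (\<Sum>r<m l. (X l r \<bullet> \<theta>) *\<^sub>R X l r)"
      by (simp add: inner_sum_right power2_eq_square inner_commute)
    then show ?thesis
      by (simp add: gram_mult_vector[OF assms(1)])
  qed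
  have linear: "(\<Sum>r<m l. y r * (X l r \<bullet> \<theta>)) = \<theta> \<bullet> g"
    by (simp add: g_def inner_sum_right inner_commute)
  have "(\<Sum>r<m l. (y r - X l r \<bullet> \<theta>)\<^sup>2)
      = (\<Sum>r<m l. (y r)\<^sup>2) - 2 * (\<Sum>r<m l. y r * (X l r \<bullet> \<theta>)) + (\<Sum>r<m l. (X l r \<bullet> \<theta>)\<^sup>2)"
    by (simp add: power2_diff sum.distrib sum_subtractf sum_distrib_left mult_ac)
  also have "\<dots> = (\<Sum>r<m l. (y r)\<^sup>2) - 2 * (\<theta> \<bullet> g) + b * (\<theta> \<bullet> \<theta>)"
    unfolding linear quadratic ..
  also have "\<dots> = b * (norm (\<theta> - (1 / b) *\<^sub>R g))\<^sup>2 + ((\<Sum>r<m l. (y r)\<^sup>2) - (norm g)\<^sup>2 / b)"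
    using \<open>b > 0\<close> by (simp add: power2_norm_eq_inner inner_diff_left inner_diff_right inner_commute field_simps)
  finally show ?thesis .
qed

lemma gram_trace:
  assumes "gram X m l = (mat b :: real^'d^'d)"
  shows "(\<Sum>a\<in>UNIV. \<Sum>r<m l. (X l r $ a)\<^sup>2) = real CARD('d) * b"
proof -
  have "(\<Sum>a\<in>UNIV. \<Sum>r<m l. (X l r $ a)\<^sup>2) = (\<Sum>a\<in>(UNIV :: 'd set). gram X m l $ a $ a)"
    by (simp add: gram_def power2_eq_square)
  then show ?thesis
    by (simp add: assms mat_def)
qed

section \<open>The hierarchical linear model\<close>

locale hier_model = prob_space M for M :: "'a measure" +
  fixes n k :: nat and c m :: "nat \<Rightarrow> nat" and X :: "nat \<Rightarrow> nat \<Rightarrow> real^'d" and \<beta> :: "nat \<Rightarrow> real"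
    and thstar :: "real^'d" and sbar :: real and sc s :: "nat \<Rightarrow> real"
    and N :: "'d noise_idx \<Rightarrow> 'a \<Rightarrow> real" and i :: nat
  assumes clus: "\<forall>i<n. c i < k"
    and nonempty: "\<forall>j<k. \<exists>i<n. c i = j"
    and sbar_pos: "sbar > 0" and sc_pos: "\<forall>j<k. sc j > 0" and s_pos: "\<forall>i<n. s i > 0"
    and indep: "indep_vars (\<lambda>_. borel) N (noise_index_set n k m)"
    and dist_bar: "\<forall>j<k. \<forall>a. distributed M lborel (N (Bar j a)) (normal_density 0 sbar)"
    and dist_loc: "\<forall>i<n. \<forall>a. distributed M lborel (N (Loc i a)) (normal_density 0 (sc (c i)))"
    and dist_eps: "\<forall>i<n. \<forall>r<m i. distributed M lborel (N (Eps i r)) (normal_density 0 (s i))"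
    and gram_eq: "\<forall>i<n. gram X m i = mat (\<beta> i) \<and> \<beta> i > 0"
    and i_lt: "i < n"

sublocale hier_model \<subseteq> hier_weights n k c sbar sc "\<lambda>l. (s l)\<^sup>2 / \<beta> l" i
  using clus nonempty sbar_pos sc_pos s_pos gram_eq i_lt by unfold_locales auto

context hier_model
begin

abbreviation data :: "'a \<Rightarrow> nat \<Rightarrow> nat \<Rightarrow> real" where
  "data \<omega> \<equiv> \<lambda>l r. obs X thstar N c l r \<omega>"

lemma local_est_eq:
  assumes "l < n"
  shows "local_est X m y l = (1 / \<beta> l) *\<^sub>R xty X m y l"
proof -
  have "gram X m l = mat (\<beta> l)" "\<beta> l \<noteq> 0"
    using gram_eq assms by auto
  then show ?thesis
    by (simp add: local_est_def matrix_inv_mat_mult_vector)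
qed

lemma local_est_data:
  assumes "l < n"
  shows "local_est X m (data \<omega>) l = client_param thstar N c l \<omega> + (\<Sum>r<m l. (N (Eps l r) \<omega> / \<beta> l) *\<^sub>R X l r)"
proof -
  have "xty X m (data \<omega>) l = \<beta> l *\<^sub>R client_param thstar N c l \<omega> + (\<Sum>r<m l. N (Eps l r) \<omega> *\<^sub>R X l r)"
    using gram_eq assms
    by (simp add: xty_def obs_def scaleR_add_left sum.distrib gram_mult_vector)
  moreover have "\<beta> l \<noteq> 0"
    using gram_eq assms by auto
  ultimately show ?thesis
    using assms by (simp add: local_est_eq scaleR_add_right scaleR_sum_right divide_inverse mult.commute)
qed

lemma hier_obj_eq_obj:
  "hier_obj n k c m X sbar sc s y \<theta> w wb = obj (local_est X m y) \<theta> w wb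
     + (\<Sum>l<n. 1 / (2 * (s l)\<^sup>2) * ((\<Sum>r<m l. (y l r)\<^sup>2) - (norm (xty X m y l))\<^sup>2 / \<beta> l))"
proof -
  define D where "D l = 1 / (2 * (s l)\<^sup>2) * ((\<Sum>r<m l. (y l r)\<^sup>2) - (norm (xty X m y l))\<^sup>2 / \<beta> l)" for l
  have data_term: "1 / (2 * (s l)\<^sup>2) * (\<Sum>r<m l. (y l r - X l r \<bullet> \<theta> l)\<^sup>2)
      = prec_data l / 2 * (norm (\<theta> l - local_est X m y l))\<^sup>2 + D l" if "l < n" for l
  proof -
    have "gram X m l = mat (\<beta> l)" "\<beta> l > 0" "s l > 0"
      using gram_eq s_pos that by auto
    then show ?thesis
      using sum_sq_residual_gram[of X m l "\<beta> l" "y l" "\<theta> l"]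
      by (simp add: D_def prec_data_def local_est_eq[OF that] xty_def field_simps)
  qed
  have client_term: "1 / (2 * (s l)\<^sup>2) * (\<Sum>r<m l. (y l r - X l r \<bullet> \<theta> l)\<^sup>2) + 1 / (sc j)\<^sup>2 / 2 * (norm (\<theta> l - w j))\<^sup>2
      = prec_data l / 2 * (norm (\<theta> l - local_est X m y l))\<^sup>2 + prec_client j / 2 * (norm (\<theta> l - w j))\<^sup>2 + D l"
    if "l \<in> cluster j" for l j
    using that data_term by (simp add: cluster_def prec_client_def)
  have "hier_obj n k c m X sbar sc s y \<theta> w wb = (\<Sum>j<k. prec_cluster / 2 * (norm (w j - wb))\<^sup>2
      + (\<Sum>l\<in>cluster j. prec_data l / 2 * (norm (\<theta> l - local_est X m y l))\<^sup>2
          + prec_client j / 2 * (norm (\<theta> l - w j))\<^sup>2 + D l))"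
    unfolding hier_obj_def cluster_def[symmetric] prec_cluster_def
    by (simp only: client_term cong: sum.cong)
  also have "\<dots> = obj (local_est X m y) \<theta> w wb + (\<Sum>j<k. \<Sum>l\<in>cluster j. D l)"
    by (simp add: obj_def sum.distrib algebra_simps)
  finally show ?thesis
    unfolding sum_clusters D_def .
qed

lemma hier_est_eq: "hier_est n k c m X sbar sc s y i = (\<Sum>l<n. hcoef l *\<^sub>R local_est X m y l)"
proof -
  let ?b = "local_est X m y" and ?F = "hier_obj n k c m X sbar sc s y"
  have "\<exists>\<theta> w wb. \<forall>\<theta>' w' wb'. ?F \<theta> w wb \<le> ?F \<theta>' w' wb'"
    by (intro exI[of _ "opt_client ?b"] exI[of _ "opt_cluster ?b"] exI[of _ "global_mean ?b"] allI)
       (simp add: hier_obj_eq_obj obj_opt_le)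
  then have "\<exists>w wb. \<forall>\<theta>' w' wb'. ?F (hier_est n k c m X sbar sc s y) w wb \<le> ?F \<theta>' w' wb'"
    unfolding hier_est_def by (rule someI_ex)
  then obtain w wb where "?F (hier_est n k c m X sbar sc s y) w wb \<le> ?F (opt_client ?b) (opt_cluster ?b) (global_mean ?b)"
    by blast
  then have "hier_est n k c m X sbar sc s y i = opt_client ?b i"
    by (intro obj_minimizer_client_eq) (simp add: hier_obj_eq_obj)
  then show ?thesis
    by (simp add: opt_client_eq_hcoef)
qed

lemma sum_\<beta>_pos: "(\<Sum>l<n. \<beta> l) > 0"
  using gram_eq i_lt by (intro sum_pos) auto

lemma pooled_est_eq:
  "pooled_est n X m y = (\<Sum>l<n. (\<beta> l / (\<Sum>l<n. \<beta> l)) *\<^sub>R local_est X m y l)"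
proof -
  have "(\<Sum>l<n. gram X m l) = mat (\<Sum>l<n. \<beta> l)"
    using gram_eq by (simp add: vec_eq_iff mat_def)
  moreover have "xty X m y l = \<beta> l *\<^sub>R local_est X m y l" if "l < n" for l
  proof -
    have "\<beta> l \<noteq> 0"
      using gram_eq that by auto
    then show ?thesis
      by (simp add: local_est_eq[OF that])
  qed
  then have "(\<Sum>l<n. xty X m y l) = (\<Sum>l<n. \<beta> l *\<^sub>R local_est X m y l)"
    by simp
  ultimately show ?thesis
    using sum_\<beta>_pos
    by (simp add: pooled_est_def matrix_inv_mat_mult_vector scaleR_sum_right)
qed

definition noise_coords :: "'d \<Rightarrow> 'd noise_idx set" where
  "noise_coords a = (\<lambda>j. Bar j a) ` {..<k} \<union> (\<lambda>l. Loc l a) ` {..<n} \<union> (\<lambda>(l, r). Eps l r) ` (SIGMA l:{..<n}. {..<m l})"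

definition noise_sd :: "'d noise_idx \<Rightarrow> real" where
  "noise_sd t = (case t of Bar j a \<Rightarrow> sbar | Loc l a \<Rightarrow> sc (c l) | Eps l r \<Rightarrow> s l)"

definition error_coef :: "(nat \<Rightarrow> real) \<Rightarrow> 'd \<Rightarrow> 'd noise_idx \<Rightarrow> real" where
  "error_coef w a t = (case t of
       Bar j a' \<Rightarrow> (\<Sum>l\<in>cluster j. w l) - (if j = c i then 1 else 0)
     | Loc l a' \<Rightarrow> w l - (if l = i then 1 else 0)
     | Eps l r \<Rightarrow> w l * X l r $ a / \<beta> l)"

lemma sum_noise_coords:
  "(\<Sum>t\<in>noise_coords a. f t) = (\<Sum>j<k. f (Bar j a)) + (\<Sum>l<n. f (Loc l a)) + (\<Sum>l<n. \<Sum>r<m l. f (Eps l r))"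
proof -
  have "inj_on (\<lambda>j. Bar j a) {..<k}" "inj_on (\<lambda>l. Loc l a) {..<n}"
    and eps_inj: "inj_on (\<lambda>(l, r). Eps l r) (SIGMA l:{..<n}. {..<m l})"
    by (auto simp: inj_on_def)
  then have "(\<Sum>t\<in>(\<lambda>j. Bar j a) ` {..<k}. f t) = (\<Sum>j<k. f (Bar j a))"
    and "(\<Sum>t\<in>(\<lambda>l. Loc l a) ` {..<n}. f t) = (\<Sum>l<n. f (Loc l a))"
    by (simp_all add: sum.reindex)
  moreover have "(\<Sum>t\<in>(\<lambda>(l, r). Eps l r) ` (SIGMA l:{..<n}. {..<m l}). f t) = (\<Sum>(l, r)\<in>(SIGMA l:{..<n}. {..<m l}). f (Eps l r))"
    by (rule sum.reindex_cong[OF eps_inj refl]) auto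
  moreover have "\<dots> = (\<Sum>l<n. \<Sum>r<m l. f (Eps l r))"
    by (rule sum.Sigma[symmetric]) auto
  moreover have "(\<Sum>t\<in>noise_coords a. f t) = (\<Sum>t\<in>(\<lambda>j. Bar j a) ` {..<k}. f t)
      + (\<Sum>t\<in>(\<lambda>l. Loc l a) ` {..<n}. f t) + (\<Sum>t\<in>(\<lambda>(l, r). Eps l r) ` (SIGMA l:{..<n}. {..<m l}). f t)"
    unfolding noise_coords_def by (subst sum.union_disjoint; auto)+
  ultimately show ?thesis
    by simp
qed

lemma noise_coords_normal:
  "t \<in> noise_coords a \<Longrightarrow> noise_sd t > 0 \<and> distributed M lborel (N t) (normal_density 0 (noise_sd t))"
  using dist_bar dist_loc dist_eps sbar_pos sc_pos s_pos clus by (auto simp: noise_coords_def noise_sd_def)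

lemma estimation_error_component:
  assumes "(\<Sum>l<n. w l) = 1"
  shows "((\<Sum>l<n. w l *\<^sub>R local_est X m (data \<omega>) l) - client_param thstar N c i \<omega>) $ a
    = (\<Sum>t\<in>noise_coords a. error_coef w a t * N t \<omega>)"
proof -
  have "(\<Sum>l<n. w l *\<^sub>R local_est X m (data \<omega>) l)
      = (\<Sum>l<n. w l *\<^sub>R (client_param thstar N c l \<omega> + (\<Sum>r<m l. (N (Eps l r) \<omega> / \<beta> l) *\<^sub>R X l r)))"
    by (intro sum.cong refl) (simp add: local_est_data)
  then have "((\<Sum>l<n. w l *\<^sub>R local_est X m (data \<omega>) l) - client_param thstar N c i \<omega>) $ a
      = (\<Sum>l<n. w l * thstar $ a) + (\<Sum>l<n. w l * N (Bar (c l) a) \<omega>) + (\<Sum>l<n. w l * N (Loc l a) \<omega>)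
        + (\<Sum>l<n. \<Sum>r<m l. w l * X l r $ a / \<beta> l * N (Eps l r) \<omega>)
        - (thstar $ a + N (Bar (c i) a) \<omega> + N (Loc i a) \<omega>)"
    by (simp add: client_param_def cluster_param_def sum.distrib distrib_left sum_distrib_left mult_ac)
  also have "(\<Sum>l<n. w l * N (Bar (c l) a) \<omega>) = (\<Sum>j<k. (\<Sum>l\<in>cluster j. w l) * N (Bar j a) \<omega>)"
    by (simp add: sum_distrib_right sum_clusters)
  also have "(\<Sum>l<n. w l * thstar $ a) = thstar $ a"
    using assms by (simp add: sum_distrib_right[symmetric])
  also have "N (Bar (c i) a) \<omega> = (\<Sum>j<k. (if j = c i then 1 else 0) * N (Bar j a) \<omega>)"
    using c_i_lt by (simp add: if_distrib[of "\<lambda>t. t * _"] cong: if_cong)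
  also have "N (Loc i a) \<omega> = (\<Sum>l<n. (if l = i then 1 else 0) * N (Loc l a) \<omega>)"
    using i_lt by (simp add: if_distrib[of "\<lambda>t. t * _"] cong: if_cong)
  finally show ?thesis
    by (simp add: sum_noise_coords error_coef_def left_diff_distrib sum_subtractf)
qed

lemma sum_error_coef_sq:
  "(\<Sum>a\<in>UNIV. \<Sum>t\<in>noise_coords a. (error_coef w a t)\<^sup>2 * (noise_sd t)\<^sup>2) = real CARD('d) * risk w"
proof -
  have "(\<Sum>a\<in>(UNIV :: 'd set). \<Sum>l<n. \<Sum>r<m l. (w l * X l r $ a / \<beta> l)\<^sup>2 * (s l)\<^sup>2)
      = (\<Sum>l<n. (w l)\<^sup>2 * (s l)\<^sup>2 / (\<beta> l)\<^sup>2 * (\<Sum>a\<in>UNIV. \<Sum>r<m l. (X l r $ a)\<^sup>2))"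
    by (subst sum.swap) (simp add: sum_distrib_left sum_divide_distrib power_divide power_mult_distrib mult_ac)
  also have "\<dots> = (\<Sum>l<n. real CARD('d) * ((s l)\<^sup>2 / \<beta> l * (w l)\<^sup>2))"
  proof (intro sum.cong refl)
    fix l assume "l \<in> {..<n}"
    then have "gram X m l = mat (\<beta> l)" "\<beta> l > 0"
      using gram_eq by auto
    then show "(w l)\<^sup>2 * (s l)\<^sup>2 / (\<beta> l)\<^sup>2 * (\<Sum>a\<in>UNIV. \<Sum>r<m l. (X l r $ a)\<^sup>2)
        = real CARD('d) * ((s l)\<^sup>2 / \<beta> l * (w l)\<^sup>2)"
      unfolding gram_trace[OF \<open>gram X m l = mat (\<beta> l)\<close>] by (simp add: power2_eq_square)
  qed
  finally have "(\<Sum>a\<in>(UNIV :: 'd set). \<Sum>l<n. \<Sum>r<m l. (w l * X l r $ a / \<beta> l)\<^sup>2 * (s l)\<^sup>2)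
      = real CARD('d) * (\<Sum>l<n. (s l)\<^sup>2 / \<beta> l * (w l)\<^sup>2)"
    by (simp add: sum_distrib_left)
  then show ?thesis
    by (simp add: sum_noise_coords error_coef_def noise_sd_def risk_def sum.distrib
        sum_distrib_left algebra_simps)
qed

lemma expected_sq_error:
  assumes "(\<Sum>l<n. w l) = 1"
  shows "expectation (\<lambda>\<omega>. (norm ((\<Sum>l<n. w l *\<^sub>R local_est X m (data \<omega>) l) - client_param thstar N c i \<omega>))\<^sup>2)
    = real CARD('d) * risk w"
proof -
  have "finite (noise_coords a)" "noise_coords a \<subseteq> noise_index_set n k m" for a
    by (auto simp: noise_coords_def noise_index_set_def)
  note coord = indep_normal_sum_square[OF this indep noise_coords_normal]
  have "(\<lambda>\<omega>. (norm ((\<Sum>l<n. w l *\<^sub>R local_est X m (data \<omega>) l) - client_param thstar N c i \<omega>))\<^sup>2)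
      = (\<lambda>\<omega>. \<Sum>a\<in>UNIV. (\<Sum>t\<in>noise_coords a. error_coef w a t * N t \<omega>)\<^sup>2)"
    by (simp only: power2_norm_eq_inner inner_vec_def inner_real_def estimation_error_component[OF assms]) (simp only: power2_eq_square)
  moreover have "expectation (\<lambda>\<omega>. \<Sum>a\<in>UNIV. (\<Sum>t\<in>noise_coords a. error_coef w a t * N t \<omega>)\<^sup>2)
      = (\<Sum>a\<in>UNIV. \<Sum>t\<in>noise_coords a. (error_coef w a t)\<^sup>2 * (noise_sd t)\<^sup>2)"
    using coord by (simp add: Bochner_Integration.integral_sum)
  ultimately show ?thesis
    by (simp add: sum_error_coef_sq)
qed

end

theorem mainTheorem12:
  fixes M :: "'a measure"
    and n k :: nat
    and c :: "nat \<Rightarrow> nat"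
    and m :: "nat \<Rightarrow> nat"
    and X :: "nat \<Rightarrow> nat \<Rightarrow> real^'d"
    and \<beta> :: "nat \<Rightarrow> real"
    and thstar :: "real^'d"
    and sbar :: real and sc :: "nat \<Rightarrow> real" and s :: "nat \<Rightarrow> real"
    and N :: "'d noise_idx \<Rightarrow> 'a \<Rightarrow> real"
    and i :: nat
  assumes "prob_space M"
    and clus: "\<forall>i<n. c i < k"
    and nonempty: "\<forall>j<k. \<exists>i<n. c i = j"
    and sbar_pos: "sbar > 0" and sc_pos: "\<forall>j<k. sc j > 0" and s_pos: "\<forall>i<n. s i > 0"
    and indep: "prob_space.indep_vars M (\<lambda>_. borel) N (noise_index_set n k m)"
    and dist_bar: "\<forall>j<k. \<forall>a. distributed M lborel (N (Bar j a)) (normal_density 0 sbar)"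
    and dist_loc: "\<forall>i<n. \<forall>a. distributed M lborel (N (Loc i a)) (normal_density 0 (sc (c i)))"
    and dist_eps: "\<forall>i<n. \<forall>r<m i. distributed M lborel (N (Eps i r)) (normal_density 0 (s i))"
    and gram_eq: "\<forall>i<n. gram X m i = mat (\<beta> i) \<and> \<beta> i > 0"
    and i_lt: "i < n"
  shows "(let y = (\<lambda>\<omega> i r. obs X thstar N c i r \<omega>);
              err = (\<lambda>est. prob_space.expectation M
                        (\<lambda>\<omega>. (norm (est \<omega> - client_param thstar N c i \<omega>))\<^sup>2))
          in err (\<lambda>\<omega>. hier_est n k c m X sbar sc s (y \<omega>) i)
             \<le> min (err (\<lambda>\<omega>. local_est X m (y \<omega>) i)) (err (\<lambda>\<omega>. pooled_est n X m (y \<omega>))))"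
proof -
  interpret hier_model M n k c m X \<beta> thstar sbar sc s N i
    by (intro hier_model.intro hier_model_axioms.intro assms)
  define own where "own l = (if l = i then 1 else 0 :: real)" for l
  define pooled where "pooled l = \<beta> l / (\<Sum>l<n. \<beta> l)" for l
  have weights: "(\<Sum>l<n. own l) = 1" "(\<Sum>l<n. pooled l) = 1"
    using i_lt sum_\<beta>_pos by (simp_all add: own_def pooled_def sum_divide_distrib[symmetric])
  have "local_est X m y i = (\<Sum>l<n. own l *\<^sub>R local_est X m y l)" for y
    using i_lt by (simp add: own_def if_distrib[of "\<lambda>t. t *\<^sub>R _"] cong: if_cong)
  then have local: "expectation (\<lambda>\<omega>. (norm (local_est X m (data \<omega>) i - client_param thstar N c i \<omega>))\<^sup>2)
      = real CARD('d) * risk own"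
    using expected_sq_error[OF weights(1)] by simp
  have "pooled_est n X m y = (\<Sum>l<n. pooled l *\<^sub>R local_est X m y l)" for y
    by (simp add: pooled_def pooled_est_eq)
  then have pooled: "expectation (\<lambda>\<omega>. (norm (pooled_est n X m (data \<omega>) - client_param thstar N c i \<omega>))\<^sup>2)
      = real CARD('d) * risk pooled"
    using expected_sq_error[OF weights(2)] by simp
  have hier: "expectation (\<lambda>\<omega>. (norm (hier_est n k c m X sbar sc s (data \<omega>) i - client_param thstar N c i \<omega>))\<^sup>2)
      = real CARD('d) * risk hcoef"
    unfolding hier_est_eq by (rule expected_sq_error[OF sum_hcoef])
  show ?thesis
    unfolding Let_def local pooled hier
    using risk_hcoef_le[OF weights(1)] risk_hcoef_le[OF weights(2)] by simp
qed

end
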